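(* Let $1\le p<\infty$ and let $T$ be a Dunford–Schwartz operator on $l_\infty$. Then for each $x\in l_p$ there exists $\widehat{x}\in l_p$ such that $$\Big\|\frac1n\sum_{k=0}^{n-1}T^k(x)-\widehat{x}\Big\|_\infty\to 0 \quad (n\to\infty).$$
   Context: $l_\infty$ is the space of bounded real sequences with $\|x\|_\infty=\sup_n|(x)_n|$; $l_p=\{x\in l_\infty:\|x\|_p=(\sum_n|(x)_n|^p)^{1/p}<\infty\}$. A linear operator $T:l_\infty\to l_\infty$ is a Dunford–Schwartz operator if $\|T(x)\|_1\le\|x\|_1$ for all $x\in l_1$ and $\|T(x)\|_\infty\le\|x\|_\infty$ for all $x\in l_\infty$. *)

theory Defs
  imports "HOL-Analysis.Analysis"
begin

definition linfty :: "(nat \<Rightarrow> real) set" where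
  "linfty = {x. \<exists>B. \<forall>n. \<bar>x n\<bar> \<le> B}"

definition norm_inf :: "(nat \<Rightarrow> real) \<Rightarrow> real" where
  "norm_inf x = (SUP n. \<bar>x n\<bar>)"

definition lp :: "real \<Rightarrow> (nat \<Rightarrow> real) set" where
  "lp p = {x \<in> linfty. summable (\<lambda>n. \<bar>x n\<bar> powr p)}"

definition norm_p :: "real \<Rightarrow> (nat \<Rightarrow> real) \<Rightarrow> real" where
  "norm_p p x = (\<Sum>n. \<bar>x n\<bar> powr p) powr (1 / p)"

definition dunford_schwartz :: "((nat \<Rightarrow> real) \<Rightarrow> (nat \<Rightarrow> real)) \<Rightarrow> bool" where
  "dunford_schwartz T \<longleftrightarrow>
     (\<forall>x\<in>linfty. T x \<in> linfty) \<and>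
     (\<forall>x\<in>linfty. \<forall>y\<in>linfty. \<forall>a b::real. T (\<lambda>n. a * x n + b * y n) = (\<lambda>n. a * T x n + b * T y n)) \<and>
     (\<forall>x\<in>lp 1. T x \<in> lp 1 \<and> norm_p 1 (T x) \<le> norm_p 1 x) \<and>
     (\<forall>x\<in>linfty. norm_inf (T x) \<le> norm_inf x)"

end

theory Submission
  imports Defs "HOL-Library.Function_Algebras"
begin

text \<open>
  A Dunford--Schwartz operator \<open>T\<close> acts on sequences tending to \<open>0\<close> through its matrix
  \<open>a\<^sub>i\<^sub>j = T(e\<^sub>j)\<^sub>i\<close>, whose rows have \<open>l\<^sub>1\<close>-norm at most \<open>1\<close> because \<open>T\<close> contracts \<open>l\<^sub>\<infinity>\<close> and whose
  columns have \<open>l\<^sub>1\<close>-norm at most \<open>1\<close> because \<open>T\<close> contracts \<open>l\<^sub>1\<close>. Jensen's inequality then shows that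
  \<open>T\<close>, and with it every Cesaro mean of \<open>T\<close>, contracts each \<open>l\<^sub>p\<close>.

  On \<open>l\<^sub>2\<close> the parallelogram law yields the mean ergodic theorem: the norms of the means tend
  to the least norm on the convex hull of the orbit, so the means form a minimising sequence
  and converge in \<open>l\<^sub>2\<close>, hence uniformly.

  For \<open>x \<in> l\<^sub>p\<close> write \<open>x\<close> as a finitely supported head, which lies in \<open>l\<^sub>2\<close>, plus a tail of small
  sup-norm, whose means stay uniformly small. So the means of \<open>x\<close> are uniformly Cauchy; their
  uniform limit lies in \<open>l\<^sub>p\<close> by Fatou's lemma, since all means have \<open>l\<^sub>p\<close>-norm at most that of \<open>x\<close>.
\<close>

lemma linftyI: "(\<And>i. \<bar>x i\<bar> \<le> B) \<Longrightarrow> x \<in> linfty"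
  unfolding linfty_def by auto

lemma abs_le_norm_inf: "x \<in> linfty \<Longrightarrow> \<bar>x i\<bar> \<le> norm_inf x"
  unfolding norm_inf_def linfty_def by (rule cSUP_upper) (auto simp: bdd_above_def)

lemma norm_inf_le: "(\<And>i. \<bar>x i\<bar> \<le> c) \<Longrightarrow> norm_inf x \<le> c"
  unfolding norm_inf_def by (rule cSUP_least) auto

lemma norm_inf_nonneg: "x \<in> linfty \<Longrightarrow> 0 \<le> norm_inf x"
  using abs_le_norm_inf[of x 0] by linarith

lemma linfty_lincomb:
  assumes "x \<in> linfty" "y \<in> linfty" shows "(\<lambda>n. a * x n + b * y n) \<in> linfty"
proof -
  from assms obtain B C where B: "\<And>n. \<bar>x n\<bar> \<le> B" and C: "\<And>n. \<bar>y n\<bar> \<le> C"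
    unfolding linfty_def by auto
  show ?thesis
  proof (rule linftyI)
    fix i
    have "\<bar>a * x i + b * y i\<bar> \<le> \<bar>a\<bar> * \<bar>x i\<bar> + \<bar>b\<bar> * \<bar>y i\<bar>"
      by (metis abs_mult abs_triangle_ineq)
    also have "\<dots> \<le> \<bar>a\<bar> * B + \<bar>b\<bar> * C"
      by (intro add_mono mult_left_mono B C) auto
    finally show "\<bar>a * x i + b * y i\<bar> \<le> \<bar>a\<bar> * B + \<bar>b\<bar> * C" .
  qed
qed

lemma lp_imp_linfty: "x \<in> lp p \<Longrightarrow> x \<in> linfty"
  unfolding lp_def by auto

lemma lp_summable: "x \<in> lp p \<Longrightarrow> summable (\<lambda>n. \<bar>x n\<bar> powr p)"
  unfolding lp_def by auto

lemma abs_powr_powr_inverse: "p > 0 \<Longrightarrow> (\<bar>r\<bar> powr p) powr (1/p) = \<bar>r::real\<bar>"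
  by (cases "r = 0") (auto simp: powr_powr)

lemma lp_tendsto_0:
  assumes p: "p > 0" and x: "x \<in> lp p" shows "x \<longlonglongrightarrow> 0"
proof -
  have "(\<lambda>n. \<bar>x n\<bar> powr p) \<longlonglongrightarrow> 0" by (rule summable_LIMSEQ_zero[OF lp_summable[OF x]])
  then have "(\<lambda>n. (\<bar>x n\<bar> powr p) powr (1/p)) \<longlonglongrightarrow> 0 powr (1/p)"
    by (rule tendsto_powr') (use p in auto)
  then have "(\<lambda>n. \<bar>x n\<bar>) \<longlonglongrightarrow> 0" using p by (simp add: abs_powr_powr_inverse)
  then show ?thesis by (simp add: tendsto_rabs_zero_iff)
qed

lemma lp_pointwise_limit:
  assumes p: "p > 0"
    and y: "\<And>n. summable (\<lambda>i. \<bar>y n i\<bar> powr p)" "\<And>n. (\<Sum>i. \<bar>y n i\<bar> powr p) \<le> C"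
    and lim: "\<And>i. (\<lambda>n. y n i) \<longlonglongrightarrow> z i"
  shows "z \<in> lp p"
proof -
  have partial: "(\<Sum>i<M. \<bar>z i\<bar> powr p) \<le> C" for M
  proof (rule LIMSEQ_le_const2)
    show "(\<lambda>n. \<Sum>i<M. \<bar>y n i\<bar> powr p) \<longlonglongrightarrow> (\<Sum>i<M. \<bar>z i\<bar> powr p)"
      using p by (intro tendsto_sum tendsto_powr' tendsto_rabs lim) auto
    show "\<exists>N. \<forall>n\<ge>N. (\<Sum>i<M. \<bar>y n i\<bar> powr p) \<le> C"
      using order_trans[OF sum_le_suminf[OF y(1)] y(2)] by auto
  qed
  have "\<bar>z i\<bar> \<le> C powr (1/p)" for i
  proof -
    have "\<bar>z i\<bar> powr p \<le> C"
      using partial[of "Suc i"] sum_nonneg[of "{..<i}" "\<lambda>i. \<bar>z i\<bar> powr p"] by simp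
    then have "(\<bar>z i\<bar> powr p) powr (1/p) \<le> C powr (1/p)" using p by (intro powr_mono2) auto
    then show ?thesis using p by (simp add: abs_powr_powr_inverse)
  qed
  then show ?thesis
    unfolding lp_def using linftyI summableI_nonneg_bounded[OF _ partial] by auto
qed

lemma norm_inf_tendsto_0_if_uniform_limit:
  assumes "uniform_limit UNIV f l sequentially"
  shows "(\<lambda>n. norm_inf (\<lambda>i. f n i - l i)) \<longlonglongrightarrow> 0"
proof (rule LIMSEQ_I)
  fix r :: real assume r: "r > 0"
  then obtain N where N: "\<forall>n\<ge>N. \<forall>i. dist (f n i) (l i) < r / 2"
    using assms unfolding uniform_limit_sequentially_iff by (meson half_gt_zero UNIV_I)
  have "norm (norm_inf (\<lambda>i. f n i - l i)) < r" if "n \<ge> N" for n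
  proof -
    have bound: "\<bar>f n i - l i\<bar> \<le> r / 2" for i
      using N that by (auto simp: dist_real_def less_imp_le)
    then have "0 \<le> norm_inf (\<lambda>i. f n i - l i)" by (intro norm_inf_nonneg linftyI)
    moreover have "norm_inf (\<lambda>i. f n i - l i) \<le> r / 2" by (rule norm_inf_le[OF bound])
    ultimately show ?thesis using r by simp
  qed
  then show "\<exists>N. \<forall>n\<ge>N. norm (norm_inf (\<lambda>i. f n i - l i) - 0) < r" by auto
qed

lemma convex_on_powr_nonneg:
  assumes p: "p \<ge> 1" shows "convex_on {0..} (\<lambda>x::real. x powr p)"
proof (rule convex_onI)
  show "convex {0::real..}" by (simp add: convex_real_interval)
  fix t x y :: real assume t: "t > 0" "t < 1" and xy: "x \<in> {0..}" "y \<in> {0..}"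
  have shrink: "(s * z) powr p \<le> s * z powr p" if "0 < s" "s < 1" "0 \<le> z" for s z :: real
  proof -
    have "(s * z) powr p = s powr p * z powr p" using that by (simp add: powr_mult)
    also have "s powr p \<le> s powr 1" using that p by (intro powr_mono') auto
    then have "s powr p * z powr p \<le> s * z powr p" using that by (auto intro: mult_right_mono)
    finally show ?thesis .
  qed
  show "((1 - t) *\<^sub>R x + t *\<^sub>R y) powr p \<le> (1 - t) * x powr p + t * y powr p"
  proof (cases "x = 0 \<or> y = 0")
    case True
    then show ?thesis using shrink[of t y] shrink[of "1 - t" x] t xy p by auto
  next
    case False
    then have "x \<in> {0<..}" "y \<in> {0<..}" using xy by auto
    then show ?thesis using powr_convex[OF p] t unfolding convex_on_def by auto
  qed
qed

text \<open>Jensen's inequality, with the missing mass of the weights put on the point \<open>0\<close>.\<close>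
lemma powr_weighted_sum_le:
  fixes w y :: "nat \<Rightarrow> real"
  assumes p: "p \<ge> 1" and fin: "finite A" and w: "\<And>k. k \<in> A \<Longrightarrow> 0 \<le> w k"
    and y: "\<And>k. k \<in> A \<Longrightarrow> 0 \<le> y k" and ws: "(\<Sum>k\<in>A. w k) \<le> 1"
  shows "(\<Sum>k\<in>A. w k * y k) powr p \<le> (\<Sum>k\<in>A. w k * y k powr p)"
proof -
  define S where "S = insert None (Some ` A)"
  define a where "a = (\<lambda>q. case q of None \<Rightarrow> 1 - sum w A | Some k \<Rightarrow> w k)"
  define z where "z = (\<lambda>q. case q of None \<Rightarrow> 0 | Some k \<Rightarrow> y k)"
  have nn: "None \<notin> Some ` A" by auto
  have sA: "(\<Sum>q\<in>Some ` A. g q) = (\<Sum>k\<in>A. g (Some k))" for g :: "nat option \<Rightarrow> real"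
    by (simp add: sum.reindex)
  have "(\<lambda>x. x powr p) (\<Sum>q\<in>S. a q *\<^sub>R z q) \<le> (\<Sum>q\<in>S. a q * (\<lambda>x. x powr p) (z q))"
    by (rule convex_on_sum[OF _ _ convex_on_powr_nonneg[OF p]])
       (use fin w y ws in \<open>auto simp: S_def a_def z_def sum.insert[OF _ nn] sA\<close>)
  moreover have "(\<Sum>q\<in>S. a q *\<^sub>R z q) = (\<Sum>k\<in>A. w k * y k)"
    using fin by (simp add: S_def a_def z_def sum.insert[OF _ nn] sA)
  moreover have "(\<Sum>q\<in>S. a q * z q powr p) = (\<Sum>k\<in>A. w k * y k powr p)"
    using fin p by (simp add: S_def a_def z_def sum.insert[OF _ nn] sA)
  ultimately show ?thesis by simp
qed

section \<open>The Hilbert space \<open>l\<^sub>2\<close>\<close>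

instantiation "fun" :: (type, real_vector) real_vector
begin
definition scaleR_fun :: "real \<Rightarrow> ('a \<Rightarrow> 'b) \<Rightarrow> 'a \<Rightarrow> 'b" where
  "scaleR_fun c f = (\<lambda>x. c *\<^sub>R f x)"
instance by standard (auto simp: scaleR_fun_def fun_eq_iff algebra_simps)
end

lemma sum_fun_apply: "(\<Sum>k\<in>A. F k) i = (\<Sum>k\<in>A. F k i)"
  by (induct A rule: infinite_finite_induct) auto

lemma abs_powr_2: "\<bar>r\<bar> powr 2 = (r::real)^2"
  by (cases "r = 0") (simp_all add: powr_numeral)

lemma lp2_iff: "v \<in> lp 2 \<longleftrightarrow> v \<in> linfty \<and> summable (\<lambda>i. (v i)^2)"
  unfolding lp_def by (simp add: abs_powr_2)

lemma subspace_lp2: "subspace (lp 2)"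
  unfolding subspace_def
proof (intro conjI ballI allI)
  show "0 \<in> lp 2" by (simp add: lp2_iff linftyI[of _ 0])
next
  fix u v :: "nat \<Rightarrow> real" assume u: "u \<in> lp 2" and v: "v \<in> lp 2"
  have "(\<lambda>n. 1 * u n + 1 * v n) \<in> linfty"
    using u v by (intro linfty_lincomb) (auto simp: lp2_iff)
  moreover have "summable (\<lambda>i. ((u + v) i)^2)"
  proof (rule summable_comparison_test'[where N=0])
    show "summable (\<lambda>i. 2 * (u i)^2 + 2 * (v i)^2)"
      using u v by (intro summable_add summable_mult) (auto simp: lp2_iff)
    show "norm (((u + v) i)^2) \<le> 2 * (u i)^2 + 2 * (v i)^2" for i
    proof -
      have "(u i + v i)^2 \<le> 2 * (u i)^2 + 2 * (v i)^2"
        using sum_squares_ge_zero[of "u i - v i" 0] by (simp add: power2_eq_square algebra_simps)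
      then show ?thesis by simp
    qed
  qed
  ultimately show "u + v \<in> lp 2" by (simp add: lp2_iff plus_fun_def)
next
  fix c and u :: "nat \<Rightarrow> real" assume u: "u \<in> lp 2"
  have "(\<lambda>n. c * u n + 0 * u n) \<in> linfty"
    using u by (intro linfty_lincomb) (auto simp: lp2_iff)
  moreover have "summable (\<lambda>i. c^2 * (u i)^2)"
    using u by (intro summable_mult) (auto simp: lp2_iff)
  ultimately show "c *\<^sub>R u \<in> lp 2" by (simp add: lp2_iff scaleR_fun_def power_mult_distrib)
qed

definition norm2 :: "(nat \<Rightarrow> real) \<Rightarrow> real" where
  "norm2 v = sqrt (\<Sum>i. (v i)^2)"

lemma norm2_triangle:
  assumes u: "u \<in> lp 2" and v: "v \<in> lp 2"
  shows "norm2 (u + v) \<le> norm2 u + norm2 v"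
proof -
  have su: "summable (\<lambda>i. (u i)^2)" and sv: "summable (\<lambda>i. (v i)^2)"
    and suv: "summable (\<lambda>i. ((u + v) i)^2)"
    using u v subspace_add[OF subspace_lp2 u v] by (auto simp: lp2_iff)
  have partial: "(\<Sum>i<N. ((u + v) i)^2) \<le> (norm2 u + norm2 v)^2" for N
  proof -
    have "sqrt (\<Sum>i<N. ((u + v) i)^2) = L2_set (\<lambda>i. u i + v i) {..<N}" by (simp add: L2_set_def)
    also have "\<dots> \<le> L2_set u {..<N} + L2_set v {..<N}" by (rule L2_set_triangle_ineq)
    also have "L2_set u {..<N} \<le> norm2 u" unfolding L2_set_def norm2_def
      by (intro real_sqrt_le_mono sum_le_suminf su) auto
    also have "L2_set v {..<N} \<le> norm2 v" unfolding L2_set_def norm2_def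
      by (intro real_sqrt_le_mono sum_le_suminf sv) auto
    finally have "sqrt (\<Sum>i<N. ((u + v) i)^2) \<le> norm2 u + norm2 v" by simp
    then have "(sqrt (\<Sum>i<N. ((u + v) i)^2))^2 \<le> (norm2 u + norm2 v)^2"
      by (rule power_mono[OF _ real_sqrt_ge_zero]) (simp add: sum_nonneg)
    then show ?thesis by (simp add: sum_nonneg)
  qed
  have "(\<Sum>i. ((u + v) i)^2) \<le> (norm2 u + norm2 v)^2" by (rule suminf_le_const[OF suv partial])
  then have "norm2 (u + v) \<le> sqrt ((norm2 u + norm2 v)^2)"
    unfolding norm2_def[of "u + v"] by (rule real_sqrt_le_mono)
  also have "\<dots> = norm2 u + norm2 v"
    using suminf_nonneg[OF su] suminf_nonneg[OF sv] by (simp add: norm2_def)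
  finally show ?thesis .
qed

lemma norm2_scaleR: "u \<in> lp 2 \<Longrightarrow> norm2 (c *\<^sub>R u) = \<bar>c\<bar> * norm2 u"
  using suminf_mult[of "\<lambda>i. (u i)^2" "c^2"]
  by (simp add: lp2_iff norm2_def scaleR_fun_def power_mult_distrib real_sqrt_mult)

lemma norm2_parallelogram:
  assumes u: "u \<in> lp 2" and v: "v \<in> lp 2"
  shows "norm2 (u + v)^2 + norm2 (u - v)^2 = 2 * norm2 u ^ 2 + 2 * norm2 v ^ 2"
proof -
  have su: "summable (\<lambda>i. (u i)^2)" and sv: "summable (\<lambda>i. (v i)^2)"
    and s1: "summable (\<lambda>i. ((u + v) i)^2)" and s2: "summable (\<lambda>i. ((u - v) i)^2)"
    using u v subspace_add[OF subspace_lp2 u v] subspace_diff[OF subspace_lp2 u v]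
    by (auto simp: lp2_iff)
  have sq: "norm2 w ^ 2 = (\<Sum>i. (w i)^2)" if "summable (\<lambda>i. (w i)^2)" for w
    unfolding norm2_def using suminf_nonneg[OF that] by simp
  have "(\<Sum>i. ((u + v) i)^2) + (\<Sum>i. ((u - v) i)^2) = (\<Sum>i. ((u + v) i)^2 + ((u - v) i)^2)"
    by (rule suminf_add[OF s1 s2])
  also have "\<dots> = (\<Sum>i. 2 * (u i)^2 + 2 * (v i)^2)"
    by (simp add: power2_eq_square algebra_simps)
  also have "\<dots> = 2 * (\<Sum>i. (u i)^2) + 2 * (\<Sum>i. (v i)^2)"
    using suminf_add[OF summable_mult[OF su, of 2] summable_mult[OF sv, of 2]]
      suminf_mult[OF su, of 2] suminf_mult[OF sv, of 2] by simp
  finally show ?thesis using sq[OF s1] sq[OF s2] sq[OF su] sq[OF sv] by linarith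
qed

lemma abs_le_norm2: "v \<in> lp 2 \<Longrightarrow> \<bar>v i\<bar> \<le> norm2 v"
  using sum_le_suminf[of "\<lambda>i. (v i)^2" "{i}"] real_sqrt_le_mono
  by (fastforce simp: lp2_iff norm2_def)

section \<open>Mean ergodic theorem under a parallelogram law\<close>

text \<open>\<open>l\<^sub>2\<close> is not a type of its own here, so the Hilbert space is modelled as a subspace \<open>V\<close>
  of an ambient vector space with a seminorm \<open>nrm\<close> that obeys the parallelogram law on \<open>V\<close>.\<close>

locale parallelogram_contraction =
  fixes V :: "'a::real_vector set" and S :: "'a \<Rightarrow> 'a" and nrm :: "'a \<Rightarrow> real"
  assumes subspace: "subspace V"
    and S_V: "\<And>u. u \<in> V \<Longrightarrow> S u \<in> V"
    and S_add: "\<And>u v. u \<in> V \<Longrightarrow> v \<in> V \<Longrightarrow> S (u + v) = S u + S v"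
    and S_scaleR: "\<And>u c. u \<in> V \<Longrightarrow> S (c *\<^sub>R u) = c *\<^sub>R S u"
    and nrm_triangle: "\<And>u v. u \<in> V \<Longrightarrow> v \<in> V \<Longrightarrow> nrm (u + v) \<le> nrm u + nrm v"
    and nrm_scaleR: "\<And>u c. u \<in> V \<Longrightarrow> nrm (c *\<^sub>R u) = \<bar>c\<bar> * nrm u"
    and nrm_S_le: "\<And>u. u \<in> V \<Longrightarrow> nrm (S u) \<le> nrm u"
    and parallelogram:
      "\<And>u v. u \<in> V \<Longrightarrow> v \<in> V \<Longrightarrow> nrm (u + v)^2 + nrm (u - v)^2 = 2 * nrm u ^ 2 + 2 * nrm v ^ 2"
begin

lemma funpow_in_V: "u \<in> V \<Longrightarrow> (S^^k) u \<in> V"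
  by (induct k) (auto intro: S_V)

lemma funpow_S_add: "u \<in> V \<Longrightarrow> v \<in> V \<Longrightarrow> (S^^k) (u + v) = (S^^k) u + (S^^k) v"
  by (induct k) (auto simp: S_add funpow_in_V)

lemma funpow_S_scaleR: "u \<in> V \<Longrightarrow> (S^^k) (c *\<^sub>R u) = c *\<^sub>R (S^^k) u"
  by (induct k) (auto simp: S_scaleR funpow_in_V)

lemma nrm_zero: "nrm 0 = 0"
  using nrm_scaleR[OF subspace_0[OF subspace], of 0] by simp

lemma nrm_minus: "u \<in> V \<Longrightarrow> nrm (- u) = nrm u"
  using nrm_scaleR[of u "-1"] by simp

lemma nrm_nonneg: "u \<in> V \<Longrightarrow> 0 \<le> nrm u"
  using nrm_triangle[of u "- u"] subspace_neg[OF subspace] nrm_minus nrm_zero by fastforce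

lemma nrm_diff_le: "u \<in> V \<Longrightarrow> v \<in> V \<Longrightarrow> nrm (u - v) \<le> nrm u + nrm v"
  using nrm_triangle[of u "- v"] subspace_neg[OF subspace] nrm_minus by fastforce

lemma nrm_sum_le: "(\<And>k. k \<in> A \<Longrightarrow> f k \<in> V) \<Longrightarrow> nrm (sum f A) \<le> (\<Sum>k\<in>A. nrm (f k))"
proof (induct A rule: infinite_finite_induct)
  case (insert a A)
  then have "nrm (sum f (insert a A)) \<le> nrm (f a) + nrm (sum f A)"
    by (auto intro!: nrm_triangle subspace_sum[OF subspace])
  then show ?case using insert by auto
qed (auto simp: nrm_zero)

lemma nrm_funpow_le: "u \<in> V \<Longrightarrow> nrm ((S^^k) u) \<le> nrm u"
  by (induct k) (auto intro: order_trans[OF nrm_S_le] funpow_in_V)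

definition mean :: "nat \<Rightarrow> 'a \<Rightarrow> 'a" where
  "mean n u = (1 / real n) *\<^sub>R (\<Sum>k<n. (S^^k) u)"

lemma mean_in_V: "u \<in> V \<Longrightarrow> mean n u \<in> V"
  unfolding mean_def by (intro subspace_scale[OF subspace] subspace_sum[OF subspace] funpow_in_V)

lemma mean_add: "u \<in> V \<Longrightarrow> v \<in> V \<Longrightarrow> mean n (u + v) = mean n u + mean n v"
  unfolding mean_def by (simp add: funpow_S_add sum.distrib scaleR_right_distrib)

lemma mean_scaleR: "u \<in> V \<Longrightarrow> mean n (c *\<^sub>R u) = c *\<^sub>R mean n u"
  unfolding mean_def by (simp add: funpow_S_scaleR scaleR_sum_right[symmetric])

lemma nrm_mean_le:
  assumes u: "u \<in> V" shows "nrm (mean n u) \<le> nrm u"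
proof (cases "n = 0")
  case True
  then show ?thesis using nrm_nonneg[OF u] by (simp add: mean_def nrm_zero)
next
  case False
  have "nrm (mean n u) = (1 / real n) * nrm (\<Sum>k<n. (S^^k) u)"
    unfolding mean_def by (simp add: nrm_scaleR subspace_sum[OF subspace] funpow_in_V u)
  also have "\<dots> \<le> (1 / real n) * (\<Sum>k<n. nrm ((S^^k) u))"
    by (intro mult_left_mono nrm_sum_le funpow_in_V u) auto
  also have "\<dots> \<le> (1 / real n) * (\<Sum>k<n. nrm u)"
    by (intro mult_left_mono sum_mono nrm_funpow_le u) auto
  also have "\<dots> = nrm u" using False by simp
  finally show ?thesis .
qed

lemma mean_S: "u \<in> V \<Longrightarrow> mean n (S u) = mean n u + (1 / real n) *\<^sub>R ((S^^n) u - u)"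
proof -
  have "(\<Sum>k<n. (S^^k) (S u)) = (\<Sum>k<n. (S^^(Suc k)) u)"
    by (simp add: funpow_Suc_right del: funpow.simps)
  also have "\<dots> = (\<Sum>k<n. (S^^k) u) + ((S^^n) u - u)"
    using sum.lessThan_Suc_shift[of "\<lambda>k. (S^^k) u" n] by (simp add: algebra_simps)
  finally show ?thesis unfolding mean_def by (simp add: scaleR_right_distrib)
qed

lemma nrm_mean_funpow_diff_le:
  assumes u: "u \<in> V"
  shows "nrm (mean n u - mean n ((S^^k) u)) \<le> 2 * real k * nrm u / real n"
proof (induct k)
  case 0
  then show ?case by (simp add: nrm_zero)
next
  case (Suc k)
  define v where "v = (S^^k) u"
  have v: "v \<in> V" unfolding v_def by (rule funpow_in_V[OF u])
  have step: "mean n u - mean n ((S^^Suc k) u)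
      = (mean n u - mean n v) - (1 / real n) *\<^sub>R ((S^^n) v - v)"
    using mean_S[OF v] by (simp add: v_def)
  have "nrm ((1 / real n) *\<^sub>R ((S^^n) v - v)) = (1 / real n) * nrm ((S^^n) v - v)"
    by (simp add: nrm_scaleR subspace_diff[OF subspace] funpow_in_V v)
  also have "\<dots> \<le> (1 / real n) * (nrm u + nrm u)"
    using nrm_diff_le[OF funpow_in_V[OF v] v, of n] nrm_funpow_le[OF v, of n] nrm_funpow_le[OF u, of k]
    by (intro mult_left_mono) (auto simp: v_def)
  finally have small: "nrm ((1 / real n) *\<^sub>R ((S^^n) v - v)) \<le> 2 * nrm u / real n" by simp
  have "nrm (mean n u - mean n ((S^^Suc k) u))
      \<le> nrm (mean n u - mean n v) + nrm ((1 / real n) *\<^sub>R ((S^^n) v - v))"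
    unfolding step by (intro nrm_diff_le subspace_diff[OF subspace] subspace_scale[OF subspace]
        mean_in_V funpow_in_V u v)
  also have "\<dots> \<le> 2 * real k * nrm u / real n + 2 * nrm u / real n"
    using Suc small unfolding v_def by (rule add_mono)
  also have "\<dots> = 2 * real (Suc k) * nrm u / real n"
    by (simp add: add_divide_distrib[symmetric] algebra_simps)
  finally show ?case .
qed

abbreviation orbit_hull :: "'a \<Rightarrow> 'a set" where
  "orbit_hull u \<equiv> convex hull (range (\<lambda>k. (S^^k) u))"

lemma orbit_hull_subset_V: "u \<in> V \<Longrightarrow> orbit_hull u \<subseteq> V"
  by (intro hull_minimal subspace_imp_convex subspace) (auto intro: funpow_in_V)

lemma mean_in_orbit_hull:
  assumes "n \<ge> 1" shows "mean n u \<in> orbit_hull u"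
proof -
  have "mean n u = (\<Sum>k<n. (1 / real n) *\<^sub>R (S^^k) u)"
    unfolding mean_def by (simp add: scaleR_sum_right)
  also have "\<dots> \<in> orbit_hull u"
    using assms by (intro convex_sum) (auto intro: hull_inc)
  finally show ?thesis .
qed

lemma mean_funpow_tendsto:
  assumes u: "u \<in> V"
  shows "(\<lambda>n. nrm (mean n u - mean n ((S^^k) u))) \<longlonglongrightarrow> 0"
proof (rule tendsto_sandwich[OF _ _ tendsto_const lim_const_over_n])
  show "\<forall>\<^sub>F n in sequentially. 0 \<le> nrm (mean n u - mean n ((S^^k) u))"
    by (intro always_eventually allI nrm_nonneg subspace_diff[OF subspace] mean_in_V funpow_in_V u)
  show "\<forall>\<^sub>F n in sequentially. nrm (mean n u - mean n ((S^^k) u)) \<le> 2 * real k * nrm u / real n"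
    by (intro always_eventually allI nrm_mean_funpow_diff_le u)
qed

lemma convex_mean_tendsto:
  assumes u: "u \<in> V"
  shows "convex {z \<in> V. (\<lambda>n. nrm (mean n u - mean n z)) \<longlonglongrightarrow> 0}" (is "convex ?D")
proof (rule convexI)
  fix z1 z2 and a b :: real
  assume z1: "z1 \<in> ?D" and z2: "z2 \<in> ?D" and ab: "0 \<le> a" "0 \<le> b" "a + b = 1"
  have V: "z1 \<in> V" "z2 \<in> V" using z1 z2 by auto
  then have zV: "a *\<^sub>R z1 + b *\<^sub>R z2 \<in> V"
    by (intro subspace_add[OF subspace] subspace_scale[OF subspace])
  have eq: "mean n u - mean n (a *\<^sub>R z1 + b *\<^sub>R z2)
      = a *\<^sub>R (mean n u - mean n z1) + b *\<^sub>R (mean n u - mean n z2)" for n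
  proof -
    have m: "mean n (a *\<^sub>R z1 + b *\<^sub>R z2) = a *\<^sub>R mean n z1 + b *\<^sub>R mean n z2"
      using V by (simp add: mean_add mean_scaleR subspace_scale[OF subspace])
    have "a *\<^sub>R (mean n u - mean n z1) + b *\<^sub>R (mean n u - mean n z2)
        = (a + b) *\<^sub>R mean n u - (a *\<^sub>R mean n z1 + b *\<^sub>R mean n z2)"
      by (simp add: algebra_simps)
    then show ?thesis using ab(3) m by simp
  qed
  have le: "nrm (mean n u - mean n (a *\<^sub>R z1 + b *\<^sub>R z2))
      \<le> a * nrm (mean n u - mean n z1) + b * nrm (mean n u - mean n z2)" for n
  proof -
    have d1: "mean n u - mean n z1 \<in> V" and d2: "mean n u - mean n z2 \<in> V"
      using V u by (auto intro: subspace_diff[OF subspace] mean_in_V)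
    show ?thesis unfolding eq
      using nrm_triangle[OF subspace_scale[OF subspace d1, of a] subspace_scale[OF subspace d2, of b]]
      by (simp only: nrm_scaleR[OF d1] nrm_scaleR[OF d2] abs_of_nonneg[OF ab(1)] abs_of_nonneg[OF ab(2)])
  qed
  have t1: "(\<lambda>n. nrm (mean n u - mean n z1)) \<longlonglongrightarrow> 0" and t2: "(\<lambda>n. nrm (mean n u - mean n z2)) \<longlonglongrightarrow> 0"
    using z1 z2 by simp_all
  have upper: "(\<lambda>n. a * nrm (mean n u - mean n z1) + b * nrm (mean n u - mean n z2)) \<longlonglongrightarrow> 0"
    using tendsto_add[OF tendsto_mult_right_zero[OF t1] tendsto_mult_right_zero[OF t2]] by simp
  have lower: "\<forall>\<^sub>F n in sequentially. 0 \<le> nrm (mean n u - mean n (a *\<^sub>R z1 + b *\<^sub>R z2))"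
    by (intro always_eventually allI nrm_nonneg subspace_diff[OF subspace] mean_in_V u zV)
  have "(\<lambda>n. nrm (mean n u - mean n (a *\<^sub>R z1 + b *\<^sub>R z2))) \<longlonglongrightarrow> 0"
    by (rule tendsto_sandwich[OF lower _ tendsto_const upper]) (intro always_eventually allI le)
  then show "a *\<^sub>R z1 + b *\<^sub>R z2 \<in> ?D" using zV by simp
qed

lemma mean_orbit_hull_tendsto:
  assumes u: "u \<in> V" and z: "z \<in> orbit_hull u"
  shows "(\<lambda>n. nrm (mean n u - mean n z)) \<longlonglongrightarrow> 0"
proof -
  have "orbit_hull u \<subseteq> {z \<in> V. (\<lambda>n. nrm (mean n u - mean n z)) \<longlonglongrightarrow> 0}"
    using mean_funpow_tendsto[OF u] funpow_in_V[OF u] by (intro hull_minimal convex_mean_tendsto u) auto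
  then show ?thesis using z by auto
qed

text \<open>The classical Hilbert space argument: by the parallelogram law the midpoint of two
  nearly minimal elements can only be nearly minimal if they are close.\<close>
lemma minimizing_sequence_Cauchy:
  assumes C: "convex C" "C \<subseteq> V" and u: "\<And>n. u n \<in> C"
    and lim: "(\<lambda>n. nrm (u n)) \<longlonglongrightarrow> d" and min: "\<And>w. w \<in> C \<Longrightarrow> d \<le> nrm w"
    and e: "\<epsilon> > 0"
  shows "\<exists>N. \<forall>m\<ge>N. \<forall>n\<ge>N. nrm (u m - u n) < \<epsilon>"
proof -
  have uV: "u n \<in> V" for n using u C by auto
  have d0: "0 \<le> d" using lim by (rule LIMSEQ_le_const) (use nrm_nonneg uV in auto)
  have "(\<lambda>n. nrm (u n)^2) \<longlonglongrightarrow> d^2" by (intro tendsto_power lim)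
  then have "\<forall>\<^sub>F n in sequentially. nrm (u n)^2 < d^2 + \<epsilon>^2/4"
    using e by (intro order_tendstoD) auto
  then obtain N where N: "\<And>n. n \<ge> N \<Longrightarrow> nrm (u n)^2 < d^2 + \<epsilon>^2/4"
    by (auto simp: eventually_sequentially)
  show ?thesis
  proof (intro exI allI impI)
    fix m n assume m: "m \<ge> N" and n: "n \<ge> N"
    have "(1/2) *\<^sub>R u m + (1/2) *\<^sub>R u n \<in> C" by (rule convexD[OF C(1) u u]) auto
    then have "d \<le> nrm ((1/2) *\<^sub>R (u m + u n))" by (simp add: min scaleR_add_right)
    then have "d \<le> (1/2) * nrm (u m + u n)"
      using nrm_scaleR[OF subspace_add[OF subspace uV uV]] by simp
    then have "(2 * d)^2 \<le> nrm (u m + u n)^2" using d0 by (intro power_mono) auto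
    moreover have "(2 * d)^2 = 4 * d^2" by simp
    ultimately have "nrm (u m - u n)^2 < \<epsilon>^2"
      using parallelogram[OF uV uV, of m n] N[OF m] N[OF n] by linarith
    then show "nrm (u m - u n) < \<epsilon>" by (rule power2_less_imp_less) (use e in auto)
  qed
qed

lemma nrm_mean_tendsto_Inf:
  assumes u: "u \<in> V"
  shows "(\<lambda>n. nrm (mean n u)) \<longlonglongrightarrow> Inf (nrm ` orbit_hull u)"
proof (rule order_tendstoI)
  let ?d = "Inf (nrm ` orbit_hull u)"
  have bdd: "bdd_below (nrm ` orbit_hull u)"
    using orbit_hull_subset_V[OF u] nrm_nonneg by (intro bdd_belowI[of _ 0]) auto
  fix a
  assume a: "a < ?d"
  have le: "?d \<le> nrm (mean n u)" if "n \<ge> 1" for n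
    using mean_in_orbit_hull[OF that] bdd by (intro cInf_lower) auto
  show "\<forall>\<^sub>F n in sequentially. a < nrm (mean n u)"
    using eventually_ge_at_top[of 1] by (rule eventually_mono) (use a le in fastforce)
next
  let ?d = "Inf (nrm ` orbit_hull u)"
  fix a
  assume a: "?d < a"
  define \<delta> where "\<delta> = (a - ?d) / 2"
  have "u \<in> orbit_hull u" by (rule hull_inc) (metis funpow_0 rangeI)
  then have "\<exists>w\<in>nrm ` orbit_hull u. w < ?d + \<delta>"
    using a by (intro cInf_lessD) (auto simp: \<delta>_def)
  then obtain z where z: "z \<in> orbit_hull u" "nrm z < ?d + \<delta>" by auto
  have zV: "z \<in> V" using orbit_hull_subset_V[OF u] z(1) by auto
  have "\<forall>\<^sub>F n in sequentially. nrm (mean n u - mean n z) < \<delta>"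
    using a by (intro order_tendstoD(2)[OF mean_orbit_hull_tendsto[OF u z(1)]]) (simp add: \<delta>_def)
  then show "\<forall>\<^sub>F n in sequentially. nrm (mean n u) < a"
  proof (rule eventually_mono)
    fix n assume close: "nrm (mean n u - mean n z) < \<delta>"
    have "nrm (mean n u) \<le> nrm (mean n z) + nrm (mean n u - mean n z)"
      using nrm_triangle[OF mean_in_V[OF zV, of n] subspace_diff[OF subspace mean_in_V[OF u] mean_in_V[OF zV]], of n n]
      by simp
    also have "\<dots> < ?d + 2 * \<delta>" using nrm_mean_le[OF zV, of n] z(2) close by linarith
    also have "\<dots> = a" by (simp add: \<delta>_def field_simps)
    finally show "nrm (mean n u) < a" .
  qed
qed

theorem mean_Cauchy:
  assumes u: "u \<in> V" and e: "\<epsilon> > 0"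
  shows "\<exists>N. \<forall>m\<ge>N. \<forall>n\<ge>N. nrm (mean m u - mean n u) < \<epsilon>"
proof -
  have "(\<lambda>n. nrm (mean (Suc n) u)) \<longlonglongrightarrow> Inf (nrm ` orbit_hull u)"
    using LIMSEQ_Suc[OF nrm_mean_tendsto_Inf[OF u]] .
  moreover have bdd: "bdd_below (nrm ` orbit_hull u)"
    using orbit_hull_subset_V[OF u] nrm_nonneg by (intro bdd_belowI[of _ 0]) auto
  ultimately obtain N where N: "\<forall>m\<ge>N. \<forall>n\<ge>N. nrm (mean (Suc m) u - mean (Suc n) u) < \<epsilon>"
    using minimizing_sequence_Cauchy[of "orbit_hull u" "\<lambda>n. mean (Suc n) u", OF convex_convex_hull
        orbit_hull_subset_V[OF u] mean_in_orbit_hull _ cInf_lower[OF imageI bdd] e] by auto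
  show ?thesis
  proof (intro exI allI impI)
    fix m n assume "m \<ge> Suc N" "n \<ge> Suc N"
    then show "nrm (mean m u - mean n u) < \<epsilon>"
      using N[rule_format, of "m - 1" "n - 1"] by simp
  qed
qed

end

section \<open>Dunford--Schwartz operators\<close>

definition ds_matrix :: "((nat \<Rightarrow> real) \<Rightarrow> nat \<Rightarrow> real) \<Rightarrow> nat \<Rightarrow> nat \<Rightarrow> real" where
  "ds_matrix T i j = T (indicator {j}) i"

definition trunc_seq :: "nat \<Rightarrow> (nat \<Rightarrow> real) \<Rightarrow> nat \<Rightarrow> real" where
  "trunc_seq N y m = (if m < N then y m else 0)"

definition cesaro_mean :: "((nat \<Rightarrow> real) \<Rightarrow> nat \<Rightarrow> real) \<Rightarrow> nat \<Rightarrow> (nat \<Rightarrow> real) \<Rightarrow> nat \<Rightarrow> real" where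
  "cesaro_mean T n y i = (1 / real n) * (\<Sum>k<n. (T^^k) y i)"

lemma indicator_linfty: "(indicator {j} :: nat \<Rightarrow> real) \<in> linfty"
  by (rule linftyI[of _ 1]) (simp add: indicator_def)

lemma trunc_seq_linfty: "trunc_seq N y \<in> linfty"
proof (rule linftyI[of _ "\<Sum>j<N. \<bar>y j\<bar>"])
  fix i
  show "\<bar>trunc_seq N y i\<bar> \<le> (\<Sum>j<N. \<bar>y j\<bar>)"
    using member_le_sum[of i "{..<N}" "\<lambda>j. \<bar>y j\<bar>"] by (auto simp: trunc_seq_def sum_nonneg)
qed

lemma trunc_seq_lp2: "trunc_seq N y \<in> lp 2"
proof -
  have "summable (\<lambda>i. (trunc_seq N y i)^2)"
    by (rule summable_finite[of "{..<N}"]) (auto simp: trunc_seq_def)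
  then show ?thesis using trunc_seq_linfty by (simp add: lp2_iff)
qed

context
  fixes T :: "(nat \<Rightarrow> real) \<Rightarrow> nat \<Rightarrow> real"
  assumes DS: "dunford_schwartz T"
begin

lemma ds_linfty: "x \<in> linfty \<Longrightarrow> T x \<in> linfty"
  using DS unfolding dunford_schwartz_def by auto

lemma ds_lincomb:
  "x \<in> linfty \<Longrightarrow> y \<in> linfty \<Longrightarrow> T (\<lambda>n. a * x n + b * y n) = (\<lambda>n. a * T x n + b * T y n)"
  using DS unfolding dunford_schwartz_def by auto

lemma ds_l1: "x \<in> lp 1 \<Longrightarrow> T x \<in> lp 1 \<and> norm_p 1 (T x) \<le> norm_p 1 x"
  using DS unfolding dunford_schwartz_def by auto

lemma ds_diff: "x \<in> linfty \<Longrightarrow> y \<in> linfty \<Longrightarrow> T (\<lambda>n. x n - y n) = (\<lambda>n. T x n - T y n)"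
  using ds_lincomb[of x y 1 "-1"] by simp

lemma ds_zero: "T (\<lambda>n. 0) = (\<lambda>n. 0)"
  using ds_diff[of "indicator {0}" "indicator {0}", OF indicator_linfty indicator_linfty] by simp

lemma abs_ds_le_norm_inf: "x \<in> linfty \<Longrightarrow> \<bar>T x i\<bar> \<le> norm_inf x"
  using DS abs_le_norm_inf[OF ds_linfty] unfolding dunford_schwartz_def by (meson order_trans)

lemma funpow_ds_linfty: "x \<in> linfty \<Longrightarrow> (T^^k) x \<in> linfty"
  by (induct k) (auto intro: ds_linfty)

lemma funpow_ds_diff:
  "x \<in> linfty \<Longrightarrow> y \<in> linfty \<Longrightarrow> (T^^k) (\<lambda>n. x n - y n) = (\<lambda>n. (T^^k) x n - (T^^k) y n)"
  by (induct k) (auto simp: ds_diff funpow_ds_linfty)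

lemma abs_funpow_ds_le_norm_inf: "x \<in> linfty \<Longrightarrow> \<bar>(T^^k) x i\<bar> \<le> norm_inf x"
proof (induct k arbitrary: i)
  case (Suc k)
  have "\<bar>(T^^Suc k) x i\<bar> \<le> norm_inf ((T^^k) x)"
    using abs_ds_le_norm_inf[OF funpow_ds_linfty[OF Suc.prems]] by simp
  also have "\<dots> \<le> norm_inf x" using Suc by (intro norm_inf_le) auto
  finally show ?case .
qed (simp add: abs_le_norm_inf)

lemma ds_trunc_seq: "T (trunc_seq N y) i = (\<Sum>j<N. y j * ds_matrix T i j)"
proof (induct N)
  case 0
  have "trunc_seq 0 y = (\<lambda>n. 0)" by (auto simp: trunc_seq_def)
  then show ?case by (simp add: ds_zero)
next
  case (Suc N)
  have "trunc_seq (Suc N) y = (\<lambda>n. 1 * trunc_seq N y n + y N * indicator {N} n)"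
    by (auto simp: trunc_seq_def fun_eq_iff less_Suc_eq)
  then have "T (trunc_seq (Suc N) y) = (\<lambda>n. 1 * T (trunc_seq N y) n + y N * T (indicator {N}) n)"
    by (simp only: ds_lincomb[OF trunc_seq_linfty indicator_linfty])
  then have "T (trunc_seq (Suc N) y) i = T (trunc_seq N y) i + y N * ds_matrix T i N"
    by (simp add: ds_matrix_def)
  then show ?case using Suc by simp
qed

text \<open>Testing \<open>T\<close> on the sign pattern of row \<open>i\<close> bounds the row by the \<open>l\<^sub>\<infinity>\<close>-contractivity.\<close>
lemma ds_matrix_row_sum_le: "(\<Sum>j<N. \<bar>ds_matrix T i j\<bar>) \<le> 1"
proof -
  define s where "s = (\<lambda>m. sgn (ds_matrix T i m))"
  have "(\<Sum>j<N. \<bar>ds_matrix T i j\<bar>) = T (trunc_seq N s) i"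
    by (simp add: ds_trunc_seq s_def sgn_mult_abs abs_sgn mult.commute)
  also have "\<dots> \<le> norm_inf (trunc_seq N s)"
    using abs_ds_le_norm_inf[OF trunc_seq_linfty] by (meson abs_ge_self order_trans)
  also have "\<dots> \<le> 1"
    by (rule norm_inf_le) (auto simp: trunc_seq_def s_def abs_sgn_eq)
  finally show ?thesis .
qed

lemma abs_ds_matrix_le: "\<bar>ds_matrix T i j\<bar> \<le> 1"
proof -
  have "0 \<le> (\<Sum>k<j. \<bar>ds_matrix T i k\<bar>)" by (simp add: sum_nonneg)
  moreover have "(\<Sum>k<Suc j. \<bar>ds_matrix T i k\<bar>) = (\<Sum>k<j. \<bar>ds_matrix T i k\<bar>) + \<bar>ds_matrix T i j\<bar>"
    by simp
  ultimately show ?thesis using ds_matrix_row_sum_le[where N="Suc j" and i=i] by linarith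
qed

lemma ds_matrix_column_sum:
  "summable (\<lambda>i. \<bar>ds_matrix T i j\<bar>) \<and> (\<Sum>i. \<bar>ds_matrix T i j\<bar>) \<le> 1"
proof -
  have sum_indicator: "(\<Sum>n. indicator {j} n :: real) = 1"
    by (subst suminf_finite[of "{j}"]) (auto simp: indicator_def)
  have "indicator {j} \<in> lp 1"
    unfolding lp_def using indicator_linfty by (auto intro!: summable_finite[of "{j}"] simp: indicator_def)
  from ds_l1[OF this] have image: "T (indicator {j}) \<in> lp 1"
    and le: "norm_p 1 (T (indicator {j})) \<le> norm_p 1 (indicator {j})" by auto
  have sm: "summable (\<lambda>i. \<bar>ds_matrix T i j\<bar>)"
    using lp_summable[OF image] by (simp add: ds_matrix_def)
  moreover have "norm_p 1 (T (indicator {j})) = (\<Sum>i. \<bar>ds_matrix T i j\<bar>)"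
    using suminf_nonneg[OF sm] by (simp add: norm_p_def ds_matrix_def)
  ultimately show ?thesis using le by (simp add: norm_p_def sum_indicator)
qed

lemma ds_sums:
  assumes x: "x \<in> linfty" and x0: "x \<longlonglongrightarrow> 0"
  shows "(\<lambda>j. x j * ds_matrix T i j) sums T x i"
  unfolding sums_def
proof (rule LIMSEQ_I)
  fix r :: real assume r: "0 < r"
  from LIMSEQ_D[OF x0 half_gt_zero[OF r]] obtain N0 where N0: "\<And>n. n \<ge> N0 \<Longrightarrow> \<bar>x n\<bar> < r/2"
    by auto
  have "norm ((\<Sum>j<n. x j * ds_matrix T i j) - T x i) < r" if n: "n \<ge> N0" for n
  proof -
    define tail where "tail = (\<lambda>m. x m - trunc_seq n x m)"
    have "T x i - T (trunc_seq n x) i = T tail i"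
      unfolding tail_def by (simp add: ds_diff[OF x trunc_seq_linfty])
    also have "\<bar>\<dots>\<bar> \<le> norm_inf tail"
      unfolding tail_def by (intro abs_ds_le_norm_inf linfty_lincomb[OF x trunc_seq_linfty, of 1 "-1", simplified])
    also have "\<dots> \<le> r/2"
      by (rule norm_inf_le) (use N0 n r in \<open>auto simp: tail_def trunc_seq_def less_imp_le\<close>)
    finally show ?thesis using r by (simp add: ds_trunc_seq[symmetric] abs_minus_commute)
  qed
  then show "\<exists>N. \<forall>n\<ge>N. norm ((\<Sum>j<n. x j * ds_matrix T i j) - T x i) < r" by auto
qed

lemma abs_ds_powr_le:
  assumes p: "p \<ge> 1" and x: "x \<in> lp p"
  shows "summable (\<lambda>j. \<bar>ds_matrix T i j\<bar> * \<bar>x j\<bar> powr p)"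
    and "\<bar>T x i\<bar> powr p \<le> (\<Sum>j. \<bar>ds_matrix T i j\<bar> * \<bar>x j\<bar> powr p)"
proof -
  let ?B = "\<Sum>j. \<bar>ds_matrix T i j\<bar> * \<bar>x j\<bar> powr p"
  show summable: "summable (\<lambda>j. \<bar>ds_matrix T i j\<bar> * \<bar>x j\<bar> powr p)"
    using abs_ds_matrix_le
    by (intro summable_comparison_test'[OF lp_summable[OF x], of 0]) (simp add: mult_left_le_one_le)
  have partial: "\<bar>\<Sum>j<N. x j * ds_matrix T i j\<bar> \<le> ?B powr (1/p)" for N
  proof -
    define R where "R = (\<Sum>j<N. \<bar>ds_matrix T i j\<bar> * \<bar>x j\<bar>)"
    have R0: "0 \<le> R" unfolding R_def by (simp add: sum_nonneg)
    have "R powr p \<le> (\<Sum>j<N. \<bar>ds_matrix T i j\<bar> * \<bar>x j\<bar> powr p)"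
      unfolding R_def by (rule powr_weighted_sum_le[OF p]) (auto intro: ds_matrix_row_sum_le)
    also have "\<dots> \<le> ?B" by (rule sum_le_suminf[OF summable]) auto
    finally have "(R powr p) powr (1/p) \<le> ?B powr (1/p)" using p R0 by (intro powr_mono2) auto
    then have "R \<le> ?B powr (1/p)" using R0 p abs_powr_powr_inverse[of p R] by simp
    moreover have "\<bar>\<Sum>j<N. x j * ds_matrix T i j\<bar> \<le> R"
      unfolding R_def by (rule order_trans[OF sum_abs]) (simp add: abs_mult mult.commute)
    ultimately show ?thesis by linarith
  qed
  have "(\<lambda>N. \<Sum>j<N. x j * ds_matrix T i j) \<longlonglongrightarrow> T x i"
    using ds_sums[OF lp_imp_linfty[OF x] lp_tendsto_0[OF _ x]] p unfolding sums_def by simp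
  then have "\<bar>T x i\<bar> \<le> ?B powr (1/p)"
    by (rule LIMSEQ_le_const2[OF tendsto_rabs]) (use partial in auto)
  then have "\<bar>T x i\<bar> powr p \<le> (?B powr (1/p)) powr p" using p by (intro powr_mono2) auto
  also have "\<dots> = ?B" using p suminf_nonneg[OF summable] by (simp add: powr_powr)
  finally show "\<bar>T x i\<bar> powr p \<le> ?B" .
qed

lemma ds_lp:
  assumes p: "p \<ge> 1" and x: "x \<in> lp p"
  shows "T x \<in> lp p \<and> (\<Sum>i. \<bar>T x i\<bar> powr p) \<le> (\<Sum>i. \<bar>x i\<bar> powr p)"
proof -
  define f where "f = (\<lambda>j. \<bar>x j\<bar> powr p)"
  have sf: "summable f" using lp_summable[OF x] by (simp add: f_def)
  have partial: "(\<Sum>i<K. \<bar>T x i\<bar> powr p) \<le> suminf f" for K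
  proof -
    have "(\<Sum>i<K. \<bar>T x i\<bar> powr p) \<le> (\<Sum>i<K. \<Sum>j. \<bar>ds_matrix T i j\<bar> * f j)"
      unfolding f_def by (intro sum_mono abs_ds_powr_le[OF p x])
    also have "\<dots> = (\<Sum>j. \<Sum>i<K. \<bar>ds_matrix T i j\<bar> * f j)"
      unfolding f_def by (rule suminf_sum[symmetric]) (rule abs_ds_powr_le[OF p x])
    also have "\<dots> \<le> suminf f"
    proof (rule suminf_le)
      fix j
      have "(\<Sum>i<K. \<bar>ds_matrix T i j\<bar>) \<le> 1"
        using ds_matrix_column_sum[of j] order_trans[OF sum_le_suminf] by fastforce
      then have "(\<Sum>i<K. \<bar>ds_matrix T i j\<bar>) * f j \<le> 1 * f j"
        by (rule mult_right_mono) (simp add: f_def)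
      then show "(\<Sum>i<K. \<bar>ds_matrix T i j\<bar> * f j) \<le> f j" by (simp add: sum_distrib_right)
      show "summable (\<lambda>j. \<Sum>i<K. \<bar>ds_matrix T i j\<bar> * f j)"
        unfolding f_def by (intro summable_sum abs_ds_powr_le[OF p x])
    qed (rule sf)
    finally show ?thesis .
  qed
  have summable: "summable (\<lambda>i. \<bar>T x i\<bar> powr p)"
    by (rule summableI_nonneg_bounded[OF _ partial]) auto
  then show ?thesis
    using suminf_le_const[OF summable partial] ds_linfty[OF lp_imp_linfty[OF x]]
    by (simp add: lp_def f_def)
qed

lemma funpow_ds_lp:
  assumes p: "p \<ge> 1" and x: "x \<in> lp p"
  shows "(T^^k) x \<in> lp p \<and> (\<Sum>i. \<bar>(T^^k) x i\<bar> powr p) \<le> (\<Sum>i. \<bar>x i\<bar> powr p)"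
proof (induct k)
  case (Suc k)
  then show ?case using ds_lp[OF p, of "(T^^k) x"] by auto
qed (use x in auto)

lemma ds_parallelogram_contraction: "parallelogram_contraction (lp 2) T norm2"
proof
  fix u v c assume u: "u \<in> lp 2"
  show "T u \<in> lp 2" using ds_lp[of 2 u] u by simp
  show "norm2 (T u) \<le> norm2 u" using ds_lp[of 2 u] u by (simp add: norm2_def abs_powr_2)
  show "T (c *\<^sub>R u) = c *\<^sub>R T u"
    using ds_lincomb[OF lp_imp_linfty[OF u] lp_imp_linfty[OF u], of c 0] by (simp add: scaleR_fun_def)
  assume v: "v \<in> lp 2"
  show "T (u + v) = T u + T v"
    using ds_lincomb[OF lp_imp_linfty[OF u] lp_imp_linfty[OF v], of 1 1] by (simp add: plus_fun_def)
qed (use subspace_lp2 norm2_triangle norm2_scaleR norm2_parallelogram in auto)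

interpretation l2: parallelogram_contraction "lp 2" T norm2
  by (rule ds_parallelogram_contraction)

lemma l2_mean_apply: "l2.mean n y i = cesaro_mean T n y i"
  unfolding l2.mean_def cesaro_mean_def by (simp add: scaleR_fun_def sum_fun_apply)

lemma cesaro_mean_l2_Cauchy:
  assumes y: "y \<in> lp 2" and e: "\<epsilon> > 0"
  shows "\<exists>N. \<forall>m\<ge>N. \<forall>n\<ge>N. \<forall>i. \<bar>cesaro_mean T m y i - cesaro_mean T n y i\<bar> < \<epsilon>"
proof -
  obtain N where N: "\<forall>m\<ge>N. \<forall>n\<ge>N. norm2 (l2.mean m y - l2.mean n y) < \<epsilon>"
    using l2.mean_Cauchy[OF y e] by blast
  have "\<bar>cesaro_mean T m y i - cesaro_mean T n y i\<bar> \<le> norm2 (l2.mean m y - l2.mean n y)" for m n i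
    using abs_le_norm2[OF subspace_diff[OF subspace_lp2 l2.mean_in_V[OF y, of m] l2.mean_in_V[OF y, of n]], of i]
    by (simp add: l2_mean_apply)
  with N show ?thesis by (meson le_less_trans)
qed

lemma abs_cesaro_mean_le: "y \<in> linfty \<Longrightarrow> \<bar>cesaro_mean T n y i\<bar> \<le> norm_inf y"
proof (cases "n = 0")
  case False
  assume y: "y \<in> linfty"
  have "\<bar>cesaro_mean T n y i\<bar> = (1 / real n) * \<bar>\<Sum>k<n. (T^^k) y i\<bar>"
    by (simp add: cesaro_mean_def abs_mult)
  also have "\<dots> \<le> (1 / real n) * (\<Sum>k<n. \<bar>(T^^k) y i\<bar>)"
    by (intro mult_left_mono sum_abs) auto
  also have "\<dots> \<le> (1 / real n) * (\<Sum>k<n. norm_inf y)"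
    by (intro mult_left_mono sum_mono abs_funpow_ds_le_norm_inf y) auto
  also have "\<dots> = norm_inf y" using False by simp
  finally show ?thesis .
qed (simp add: cesaro_mean_def norm_inf_nonneg)

lemma cesaro_mean_diff:
  "u \<in> linfty \<Longrightarrow> v \<in> linfty \<Longrightarrow>
    cesaro_mean T n u i - cesaro_mean T n v i = cesaro_mean T n (\<lambda>m. u m - v m) i"
  by (simp add: cesaro_mean_def funpow_ds_diff sum_subtractf right_diff_distrib)

lemma abs_cesaro_mean_powr_le:
  assumes p: "p \<ge> 1"
  shows "\<bar>cesaro_mean T n y i\<bar> powr p \<le> (\<Sum>k<n. (1 / real n) * \<bar>(T^^k) y i\<bar> powr p)"
proof -
  have "\<bar>cesaro_mean T n y i\<bar> = (1 / real n) * \<bar>\<Sum>k<n. (T^^k) y i\<bar>"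
    by (simp add: cesaro_mean_def abs_mult)
  also have "\<dots> \<le> (1 / real n) * (\<Sum>k<n. \<bar>(T^^k) y i\<bar>)"
    by (intro mult_left_mono sum_abs) auto
  finally have "\<bar>cesaro_mean T n y i\<bar> \<le> (\<Sum>k<n. (1 / real n) * \<bar>(T^^k) y i\<bar>)"
    by (simp add: sum_distrib_left)
  then have "\<bar>cesaro_mean T n y i\<bar> powr p \<le> (\<Sum>k<n. (1 / real n) * \<bar>(T^^k) y i\<bar>) powr p"
    using p by (intro powr_mono2) auto
  also have "\<dots> \<le> (\<Sum>k<n. (1 / real n) * \<bar>(T^^k) y i\<bar> powr p)"
    by (intro powr_weighted_sum_le[OF p]) auto
  finally show ?thesis .
qed

lemma cesaro_mean_lp:
  assumes p: "p \<ge> 1" and y: "y \<in> lp p"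
  shows "summable (\<lambda>i. \<bar>cesaro_mean T n y i\<bar> powr p)"
    and "(\<Sum>i. \<bar>cesaro_mean T n y i\<bar> powr p) \<le> (\<Sum>i. \<bar>y i\<bar> powr p)"
proof -
  have summable_k: "summable (\<lambda>i. \<bar>(T^^k) y i\<bar> powr p)" for k
    using funpow_ds_lp[OF p y, of k] lp_summable by blast
  define g where "g = (\<lambda>i. \<Sum>k<n. (1 / real n) * \<bar>(T^^k) y i\<bar> powr p)"
  have "summable g" unfolding g_def by (intro summable_sum summable_mult summable_k)
  have pointwise: "\<bar>cesaro_mean T n y i\<bar> powr p \<le> g i" for i
    unfolding g_def by (rule abs_cesaro_mean_powr_le[OF p])
  show summable: "summable (\<lambda>i. \<bar>cesaro_mean T n y i\<bar> powr p)"
    using pointwise by (intro summable_comparison_test'[OF \<open>summable g\<close>, of 0]) auto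
  have "(\<Sum>i. \<bar>cesaro_mean T n y i\<bar> powr p) \<le> suminf g"
    by (rule suminf_le[OF pointwise summable \<open>summable g\<close>])
  also have "\<dots> = (\<Sum>k<n. (1 / real n) * (\<Sum>i. \<bar>(T^^k) y i\<bar> powr p))"
    unfolding g_def by (subst suminf_sum) (auto intro: summable_mult summable_k simp: suminf_divide[OF summable_k])
  also have "\<dots> \<le> (\<Sum>k<n. (1 / real n) * (\<Sum>i. \<bar>y i\<bar> powr p))"
    by (intro sum_mono mult_left_mono) (use funpow_ds_lp[OF p y] in auto)
  also have "\<dots> \<le> (\<Sum>i. \<bar>y i\<bar> powr p)"
    using suminf_nonneg[OF lp_summable[OF y]] by (cases "n = 0") auto
  finally show "(\<Sum>i. \<bar>cesaro_mean T n y i\<bar> powr p) \<le> (\<Sum>i. \<bar>y i\<bar> powr p)" .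
qed

lemma cesaro_mean_uniformly_Cauchy:
  assumes p: "p \<ge> 1" and x: "x \<in> lp p"
  shows "uniformly_Cauchy_on UNIV (\<lambda>n. cesaro_mean T n x)"
proof (rule uniformly_Cauchy_onI)
  fix \<epsilon> :: real assume e: "\<epsilon> > 0"
  have xl: "x \<in> linfty" by (rule lp_imp_linfty[OF x])
  obtain N0 where N0: "\<And>m. m \<ge> N0 \<Longrightarrow> \<bar>x m\<bar> < \<epsilon> / 3"
    using LIMSEQ_D[OF lp_tendsto_0[OF _ x], of "\<epsilon> / 3"] p e by auto
  define y where "y = trunc_seq N0 x"
  define w where "w = (\<lambda>m. x m - y m)"
  have yl: "y \<in> linfty" and y2: "y \<in> lp 2" unfolding y_def by (rule trunc_seq_linfty trunc_seq_lp2)+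
  have wl: "w \<in> linfty" unfolding w_def using linfty_lincomb[OF xl yl, of 1 "-1"] by simp
  have w_small: "\<bar>cesaro_mean T n w i\<bar> \<le> \<epsilon> / 3" for n i
  proof -
    have "norm_inf w \<le> \<epsilon> / 3"
      by (rule norm_inf_le) (use N0 e in \<open>auto simp: w_def y_def trunc_seq_def less_imp_le\<close>)
    then show ?thesis using abs_cesaro_mean_le[OF wl, of n i] by linarith
  qed
  obtain N where N: "\<forall>m\<ge>N. \<forall>n\<ge>N. \<forall>i. \<bar>cesaro_mean T m y i - cesaro_mean T n y i\<bar> < \<epsilon> / 3"
    using cesaro_mean_l2_Cauchy[OF y2] e by (meson divide_pos_pos zero_less_numeral)
  have "\<bar>cesaro_mean T m x i - cesaro_mean T n x i\<bar> < \<epsilon>" if "m \<ge> N" "n \<ge> N" for m n i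
  proof -
    have "\<bar>cesaro_mean T m y i - cesaro_mean T n y i\<bar> < \<epsilon> / 3" using N that by blast
    then show ?thesis
      using w_small[of m i] w_small[of n i] cesaro_mean_diff[OF xl yl, folded w_def, of m i]
        cesaro_mean_diff[OF xl yl, folded w_def, of n i]
      by linarith
  qed
  then show "\<exists>N. \<forall>i\<in>UNIV. \<forall>m\<ge>N. \<forall>n\<ge>N. dist (cesaro_mean T m x i) (cesaro_mean T n x i) < \<epsilon>"
    by (auto simp: dist_real_def)
qed

end

theorem theorem3p2:
  fixes p :: real and T :: "(nat \<Rightarrow> real) \<Rightarrow> (nat \<Rightarrow> real)" and x :: "nat \<Rightarrow> real"
  assumes "1 \<le> p" and "dunford_schwartz T" and "x \<in> lp p"
  shows "\<exists>xh \<in> lp p.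
           (\<lambda>n. norm_inf (\<lambda>i. (1 / real n) * (\<Sum>k<n. (T ^^ k) x i) - xh i)) \<longlonglongrightarrow> 0"
proof -
  obtain xh where xh: "uniform_limit UNIV (\<lambda>n. cesaro_mean T n x) xh sequentially"
    using Cauchy_uniformly_convergent[OF cesaro_mean_uniformly_Cauchy[OF assms(2,1,3)]]
    unfolding uniformly_convergent_on_def by blast
  have "xh \<in> lp p"
  proof (rule lp_pointwise_limit)
    show "(\<lambda>n. cesaro_mean T n x i) \<longlonglongrightarrow> xh i" for i
      using tendsto_uniform_limitI[OF xh] by simp
  qed (use assms cesaro_mean_lp in auto)
  moreover have "(\<lambda>n. norm_inf (\<lambda>i. cesaro_mean T n x i - xh i)) \<longlonglongrightarrow> 0"
    by (rule norm_inf_tendsto_0_if_uniform_limit[OF xh])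
  ultimately show ?thesis unfolding cesaro_mean_def by blast
qed

end
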